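(* Let $G$ be a finite group, $H$ a subgroup of $G$, and $c \in G$ with $c \notin N(H)$, where $N(H) = \{g \in G : gHg^{-1} = H\}$ is the normalizer of $H$. Then \[ |H \cap cHc| \le \frac{|H|}{2}, \] where $cHc = \{chc : h \in H\}$. *)

theory Defs
  imports Complex_Main "HOL-Algebra.Group_Action"
begin

end

theory Submission
  imports Defs
begin

text \<open>Let \<open>K = c H c\<inverse>\<close>. Since \<open>c\<close> does not normalize \<open>H\<close> and \<open>|K| = |H|\<close>, the group \<open>H\<close>
  is not contained in \<open>K\<close>, so \<open>H \<inter> K\<close> is a proper subgroup of \<open>H\<close> and by Lagrange has at most
  \<open>|H|/2\<close> elements. On the other hand \<open>(c h c)(c h\<^sub>0 c)\<inverse> = c (h h\<^sub>0\<inverse>) c\<inverse>\<close>, so \<open>H \<inter> cHc\<close>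
  lies in a single right coset of \<open>H \<inter> K\<close>.\<close>

lemma (in group) card_subgroup_inter_le_half:
  assumes H: "subgroup H G" and K: "subgroup K G" and "finite H" and "\<not> H \<subseteq> K"
  shows "2 * card (H \<inter> K) \<le> card H"
proof -
  let ?H = "G\<lparr>carrier := H\<rparr>"
  interpret H: group ?H using H by (rule subgroup_imp_group)
  have "subgroup (H \<inter> K) ?H"
    using H K by (intro subgroup_incl subgroups_Inter_pair) auto
  then have lagrange: "card (rcosets\<^bsub>?H\<^esub> (H \<inter> K)) * card (H \<inter> K) = card H"
    using H.lagrange by (simp add: order_def)
  have "card H \<noteq> 0"
    using H \<open>finite H\<close> subgroup.one_closed card_0_eq by blast
  then have "card (rcosets\<^bsub>?H\<^esub> (H \<inter> K)) \<noteq> 0"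
    using lagrange by (metis mult_0)
  moreover have "card (H \<inter> K) < card H"
    using assms by (intro psubset_card_mono) auto
  then have "card (rcosets\<^bsub>?H\<^esub> (H \<inter> K)) \<noteq> 1"
    using lagrange by auto
  ultimately have "card (rcosets\<^bsub>?H\<^esub> (H \<inter> K)) \<ge> 2"
    by linarith
  then show ?thesis
    using lagrange mult_le_mono1 by metis
qed

lemma (in group) card_conjugate:
  assumes "g \<in> carrier G" and "H \<subseteq> carrier G"
  shows "card (g <# H #> inv g) = card H"
proof -
  have "g <# H #> inv g = (\<lambda>h. g \<otimes> h \<otimes> inv g) ` H"
    unfolding l_coset_def r_coset_def by auto
  moreover have "inj_on (\<lambda>h. g \<otimes> h \<otimes> inv g) H"
    by (rule inj_onI) (use assms conjugation_is_inj in blast)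
  ultimately show ?thesis
    by (simp add: card_image)
qed

lemma (in group) not_subset_conjugate_if_notin_normalizer:
  assumes "subgroup H G" and "finite H" and "g \<in> carrier G" and "g \<notin> normalizer G H"
  shows "\<not> H \<subseteq> g <# H #> inv g"
proof
  have HG: "H \<subseteq> carrier G"
    using assms(1) by (rule subgroup.subset)
  assume "H \<subseteq> g <# H #> inv g"
  moreover have "card (g <# H #> inv g) = card H"
    using assms(3) HG by (rule card_conjugate)
  moreover have "card H > 0"
    using assms(1,2) subgroup.one_closed card_gt_0_iff by blast
  ultimately have "g <# H #> inv g = H"
    by (metis card_ge_0_finite card_subset_eq)
  with assms(3,4) HG show False
    unfolding normalizer_def stabilizer_def by auto
qed

lemma (in group) double_translate_inter_subset_rcos:
  assumes H: "subgroup H G" and c: "c \<in> carrier G"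
    and x: "x \<in> H \<inter> {c \<otimes> h \<otimes> c | h. h \<in> H}"
  shows "H \<inter> {c \<otimes> h \<otimes> c | h. h \<in> H} \<subseteq> (H \<inter> (c <# H #> inv c)) #> x"
proof
  fix y assume y: "y \<in> H \<inter> {c \<otimes> h \<otimes> c | h. h \<in> H}"
  obtain h0 where h0: "h0 \<in> H" "x = c \<otimes> h0 \<otimes> c"
    using x by blast
  obtain h where h: "h \<in> H" "y = c \<otimes> h \<otimes> c"
    using y by blast
  have HG: "H \<subseteq> carrier G"
    using H by (rule subgroup.subset)
  have carrier: "h \<in> carrier G" "h0 \<in> carrier G" "x \<in> carrier G" "y \<in> carrier G"
    using HG h(1) h0(1) x y by auto
  have "h \<otimes> inv h0 \<in> H"
    using H h(1) h0(1) by (simp add: subgroup.m_closed subgroup.m_inv_closed)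
  then have "c \<otimes> (h \<otimes> inv h0) \<otimes> inv c \<in> c <# H #> inv c"
    unfolding l_coset_def r_coset_def by blast
  moreover have "y \<otimes> inv x = c \<otimes> (h \<otimes> inv h0) \<otimes> inv c"
  proof -
    have cancel: "c \<otimes> (inv c \<otimes> w) = w" if "w \<in> carrier G" for w
      using c that by (simp add: m_assoc[symmetric])
    show ?thesis
      unfolding h(2) h0(2) using c carrier(1,2) by (simp add: m_assoc inv_mult_group cancel)
  qed
  moreover have "y \<otimes> inv x \<in> H"
    using H x y by (simp add: subgroup.m_closed subgroup.m_inv_closed)
  ultimately have "(y \<otimes> inv x) \<otimes> x \<in> (H \<inter> (c <# H #> inv c)) #> x"
    using HG carrier(3) by (intro rcosI) auto
  then show "y \<in> (H \<inter> (c <# H #> inv c)) #> x"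
    using carrier(3,4) by (simp add: m_assoc)
qed

theorem lemma2:
  fixes G (structure) and H :: "'a set" and c :: 'a
  assumes "group G" and "finite (carrier G)" and "subgroup H G"
    and "c \<in> carrier G" and "c \<notin> normalizer G H"
  shows "real (card (H \<inter> {c \<otimes> h \<otimes> c | h. h \<in> H})) \<le> real (card H) / 2"
proof -
  interpret group G by fact
  let ?K = "c <# H #> inv c"
  let ?S = "H \<inter> {c \<otimes> h \<otimes> c | h. h \<in> H}"
  have HG: "H \<subseteq> carrier G"
    using assms(3) by (rule subgroup.subset)
  have "finite H"
    using assms(2) HG finite_subset by blast
  have half: "2 * card (H \<inter> ?K) \<le> card H"
    using assms \<open>finite H\<close>
    by (intro card_subgroup_inter_le_half subgroup_conjugation_is_surj2
        not_subset_conjugate_if_notin_normalizer)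
  have "card ?S \<le> card (H \<inter> ?K)"
  proof (cases "?S = {}")
    case False
    then obtain x where x: "x \<in> ?S" by blast
    then have "x \<in> carrier G"
      using HG by blast
    have "finite ((H \<inter> ?K) #> x)"
      using assms(2) HG \<open>x \<in> carrier G\<close> r_coset_subset_G finite_subset
      by (metis inf.coboundedI1)
    then have "card ?S \<le> card ((H \<inter> ?K) #> x)"
      using assms(3,4) x by (intro card_mono double_translate_inter_subset_rcos)
    also have "\<dots> = card (H \<inter> ?K)"
      using HG \<open>x \<in> carrier G\<close> by (intro card_rcosets_equal[symmetric] rcosetsI) auto
    finally show ?thesis .
  qed simp
  with half show ?thesis
    by simp
qed

end
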